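(* The Kaplan–Meier policy $\pi^{\mathrm{KM}}_{\bm n}$ is piecewise-separable with respect to $\bm x$, with $\mathcal X_0=\emptyset$ and $\mathcal X_k=\{x_1,\dots,x_k\}$ for every $k\in\{1,\dots,K\}$. That is, for each $k\in\{0,\dots,K\}$ there is a continuous (in fact polynomial) function $P_k:[0,1]^k\times[0,1]\to[0,1]$ such that for every $F\in\Delta([0,1])$ and every $z\in[x_k,x_{k+1})$, $$\mathbb P_{\bm D\sim F^n}\big(\pi^{\mathrm{KM}}_{\bm n}(\bm x,\bm I)\le z\big)=P_k\big(F(x_1),\dots,F(x_k),F(z)\big).$$
   Context: Setup: $c_u,c_o>0$, $q=c_u/(c_u+c_o)$. $K\ge1$, $0\le x_1\le\cdots\le x_K\le1$, $x_0:=0$, $x_{K+1}:=1$, $\bm n\in\mathbb N^K$, $n=\sum_k n_k$. $\Delta([0,1])$ = probability distributions on $[0,1]$ identified with right-continuous CDFs. Demands $D^{(k)}_i$ ($k\in[K]$, $i\in[n_k]$) i.i.d. from $F$ ($\bm D\sim F^n$); sales $S^{(k)}_i=\min\{D^{(k)}_i,x_k\}$; indicators $\delta^{(k)}_i=\mathbb 1(D^{(k)}_i\le x_k)$; $\bm I$ the collection of $(S^{(k)}_i,\delta^{(k)}_i)$. Kaplan–Meier policy: let $Y_1\le\cdots\le Y_n$ be the sorted sales values, ties broken by placing uncensored observations ($\delta=1$) before censored ones, and let $\zeta_i=1$ if $Y_i$ is an uncensored observation and $0$ otherwise. Define $\hat F_{\mathrm{KM}}(z)=1-\prod_{i:Y_i\le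 z}\big(\frac{n-i}{n-i+1}\big)^{\zeta_i}$ for $z<1$ and $\hat F_{\mathrm{KM}}(1)=1$, and $\pi^{\mathrm{KM}}_{\bm n}(\bm x,\bm I)=\inf\{u\in[0,1]:\hat F_{\mathrm{KM}}(u)\ge q\}$. Piecewise-separable: a policy $\pi_{\bm n}$ is piecewise-separable w.r.t. $\bm x$ if for each $k\in\{0,\dots,K\}$ there are $\mathcal X_k\subseteq\{x_0,\dots,x_K\}$ and a continuous $P_k:[0,1]^{|\mathcal X_k|}\times[0,1]\to[0,1]$ with $\mathbb P_{\bm D\sim F^n}(\pi_{\bm n}(\bm x,\bm I)\le z)=P_k(F(\mathcal X_k),F(z))$ for all $F\in\Delta([0,1])$ and all $z\in[x_k,x_{k+1})$, where $F(\mathcal X_k)$ is the vector of $F(x_j)$, $x_j\in\mathcal X_k$. *)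

theory Defs
  imports "HOL-Probability.Probability"
begin

definition xb :: "nat \<Rightarrow> (nat \<Rightarrow> real) \<Rightarrow> nat \<Rightarrow> real" where
  "xb K x k = (if k = 0 then 0 else if k = Suc K then 1 else x k)"

definition dem_idx :: "nat \<Rightarrow> (nat \<Rightarrow> nat) \<Rightarrow> (nat \<times> nat) set" where
  "dem_idx K nn = {(k, i). k \<in> {1..K} \<and> i \<in> {1..nn k}}"

text \<open>A distribution in Delta([0,1]): a Borel probability measure on the reals
  concentrated on [0,1]; its CDF is F(z) = measure M {..z}.\<close>
definition is_demand_dist :: "real measure \<Rightarrow> bool" where
  "is_demand_dist M \<longleftrightarrow> prob_space M \<and> sets M = sets borel \<and> emeasure M {0..1} = 1"

definition cdf_of :: "real measure \<Rightarrow> real \<Rightarrow> real" where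
  "cdf_of M z = measure M {..z}"

definition observations ::
  "nat \<Rightarrow> (nat \<Rightarrow> real) \<Rightarrow> (nat \<Rightarrow> nat) \<Rightarrow> (nat \<times> nat \<Rightarrow> real) \<Rightarrow> (real \<times> bool) list" where
  "observations K x nn D =
     concat (map (\<lambda>k. map (\<lambda>i. (min (D (k, i)) (x k), D (k, i) \<le> x k)) [1..<Suc (nn k)]) [1..<Suc K])"

text \<open>Sort by sales value; ties: uncensored (True) before censored (False).
  Realised by a stable sort (sort_key is stable) on fst of the list that places all
  uncensored observations before all censored ones.\<close>
definition km_sorted :: "(real \<times> bool) list \<Rightarrow> (real \<times> bool) list" where
  "km_sorted obs = sort_key fst (filter snd obs @ filter (\<lambda>ob. \<not> snd ob) obs)"

text \<open>Kaplan--Meier CDF estimate, with Y_i = fst (ys ! (i-1)), zeta_i = snd (ys ! (i-1)).\<close>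
definition km_cdf :: "(real \<times> bool) list \<Rightarrow> real \<Rightarrow> real" where
  "km_cdf obs z =
     (if z < 1 then
        (let ys = km_sorted obs; N = length ys in
          1 - (\<Prod>i\<in>{1..N}. if fst (ys ! (i - 1)) \<le> z
                 then (real (N - i) / real (N - i + 1)) ^ (if snd (ys ! (i - 1)) then 1 else 0)
                 else 1))
      else 1)"

definition km_policy :: "real \<Rightarrow> (real \<times> bool) list \<Rightarrow> real" where
  "km_policy q obs = Inf {u \<in> {0..1}. q \<le> km_cdf obs u}"

text \<open>Domain [0,1]^k x [0,1] for P_k, with the k arguments stored in coordinates 1..k
  of a vector nat => real (product topology), all other coordinates 0.\<close>
definition pw_dom :: "nat \<Rightarrow> ((nat \<Rightarrow> real) \<times> real) set" where
  "pw_dom k = {(v, t). (\<forall>j. (j \<in> {1..k} \<longrightarrow> v j \<in> {0..1}) \<and> (j \<notin> {1..k} \<longrightarrow> v j = 0))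
                        \<and> t \<in> {0..1}}"

end

theory Submission
  imports Defs "HOL-Library.List_Lexorder"
begin

(* For z in [x_k, x_(k+1)) the Kaplan-Meier estimate is a right-continuous step function, so the
   policy is at most z exactly when q <= F_KM(z).  Whether this happens depends on the demands only
   through the cells (-inf, x_1], (x_1, x_2], ..., (x_k, z], (z, inf) containing them: replacing each
   sales value by a fixed representative of its cell (x_j for the first k cells, two points of
   (x_k, x_(k+1)) chosen independently of z for the last two) preserves the KM order wherever it
   matters, and the set of uncensored observations at most z, hence F_KM(z).  As the demands are
   i.i.d., the probability is a sum over admissible cell patterns of products of the cell masses
   F(x_j) - F(x_(j-1)), F(z) - F(x_k), 1 - F(z): a polynomial in F(x_1), ..., F(x_k), F(z) whose
   coefficients depend neither on F nor on z. *)

(* The componentwise order on pairs is fixed by HOL-Analysis, so the lexicographic sort key of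
   km_sorted (by value, uncensored first) is encoded as a list. *)
definition km_key :: "real \<times> bool \<Rightarrow> real list" where
  "km_key p = [fst p, of_bool (\<not> snd p)]"

lemma km_key_le_iff:
  "km_key p \<le> km_key p' \<longleftrightarrow> fst p < fst p' \<or> fst p = fst p' \<and> (snd p' \<longrightarrow> snd p)"
  by (auto simp: km_key_def)

lemma inj_km_key: "inj km_key"
  by (auto simp: inj_def km_key_def prod_eq_iff)

lemma insort_key_sorted_lex:
  fixes f g :: "'a \<Rightarrow> 'b::linorder"
  assumes "sorted (map (\<lambda>y. [f y, g y]) ys)" and "\<forall>y\<in>set ys. g x \<le> g y"
  shows "sorted (map (\<lambda>y. [f y, g y]) (insort_key f x ys))"
  using assms by (induction ys) (auto simp: set_insort_key)

lemma sorted_lex_sort_key: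
  fixes f g :: "'a \<Rightarrow> 'b::linorder"
  assumes "sorted (map g xs)"
  shows "sorted (map (\<lambda>y. [f y, g y]) (sort_key f xs))"
  using assms by (induction xs) (auto intro!: insort_key_sorted_lex)

lemma km_sorted_eq_sort_key: "km_sorted obs = sort_key km_key obs"
proof -
  have "map (\<lambda>p. of_bool (\<not> snd p) :: real) (filter snd obs) = map (\<lambda>_. 0) (filter snd obs)"
    "map (\<lambda>p. of_bool (\<not> snd p) :: real) (filter (\<lambda>p. \<not> snd p) obs) = map (\<lambda>_. 1) (filter (\<lambda>p. \<not> snd p) obs)"
    by (simp_all cong: map_cong)
  then have "sorted (map (\<lambda>p. of_bool (\<not> snd p) :: real) (filter snd obs @ filter (\<lambda>p. \<not> snd p) obs))"
    by (simp add: sorted_append map_replicate_const)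
  then have "sorted (map km_key (km_sorted obs))"
    unfolding km_sorted_def km_key_def by (rule sorted_lex_sort_key)
  then show ?thesis
    by (intro sort_key_inj_key_eq[symmetric]) (auto simp: km_sorted_def inj_on_subset[OF inj_km_key])
qed

definition km_factor :: "(real \<times> bool) list \<Rightarrow> real \<Rightarrow> nat \<Rightarrow> real" where
  "km_factor ys u i =
     (if fst (ys ! i) \<le> u \<and> snd (ys ! i) then real (length ys - Suc i) / real (length ys - i) else 1)"

lemma length_km_sorted [simp]: "length (km_sorted obs) = length obs"
  by (simp add: km_sorted_eq_sort_key)

lemma km_cdf_eq_prod:
  "km_cdf obs u = (if u < 1 then 1 - (\<Prod>i<length obs. km_factor (km_sorted obs) u i) else 1)"
proof -
  have "km_cdf obs u = (if u < 1 then 1 - (\<Prod>i\<in>{1..length obs}. km_factor (km_sorted obs) u (i - 1)) else 1)"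
    unfolding km_cdf_def Let_def length_km_sorted
    by (auto intro!: prod.cong simp: km_factor_def Suc_diff_le)
  then show ?thesis by (simp add: prod.atLeast1_atMost_eq)
qed

lemma km_factor_bounds: "0 \<le> km_factor ys u i" "km_factor ys u i \<le> 1"
  by (auto simp: km_factor_def divide_le_eq_1)

lemma km_factor_antimono: "u \<le> u' \<Longrightarrow> km_factor ys u' i \<le> km_factor ys u i"
  using km_factor_bounds[of ys u' i] by (auto simp: km_factor_def)

lemma km_cdf_mono: "mono (km_cdf obs)"
proof
  fix u u' :: real assume "u \<le> u'"
  have "(\<Prod>i<length obs. km_factor (km_sorted obs) u' i) \<le> (\<Prod>i<length obs. km_factor (km_sorted obs) u i)"
    by (intro prod_mono) (simp add: km_factor_bounds km_factor_antimono[OF \<open>u \<le> u'\<close>])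
  moreover have "0 \<le> (\<Prod>i<length obs. km_factor (km_sorted obs) u i)"
    by (simp add: prod_nonneg km_factor_bounds)
  ultimately show "km_cdf obs u \<le> km_cdf obs u'"
    using \<open>u \<le> u'\<close> by (auto simp: km_cdf_eq_prod)
qed

lemma eventually_km_cdf_at_right:
  assumes "z < 1"
  shows "eventually (\<lambda>u. km_cdf obs u = km_cdf obs z) (at_right z)"
proof -
  let ?ys = "km_sorted obs"
  have "eventually (\<lambda>u. km_factor ?ys u i = km_factor ?ys z i) (at_right z)" for i
  proof (cases "fst (?ys ! i) \<le> z")
    case True
    have "eventually (\<lambda>u. z < u) (at_right z)" by (rule eventually_at_right_less)
    then show ?thesis by eventually_elim (use True in \<open>simp add: km_factor_def\<close>)
  next
    case False
    have "eventually (\<lambda>u. u < fst (?ys ! i)) (at_right z)"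
      unfolding eventually_at_right_field using False by (intro exI[of _ "fst (?ys ! i)"]) auto
    then show ?thesis by eventually_elim (use False in \<open>simp add: km_factor_def\<close>)
  qed
  then have "eventually (\<lambda>u. \<forall>i\<in>{..<length obs}. km_factor ?ys u i = km_factor ?ys z i) (at_right z)"
    by (intro eventually_ball_finite) auto
  moreover have "eventually (\<lambda>u. u < 1) (at_right z)"
    unfolding eventually_at_right_field using assms by (intro exI[of _ 1]) auto
  ultimately show ?thesis
  proof eventually_elim
    case (elim u)
    then have "(\<Prod>i<length obs. km_factor ?ys u i) = (\<Prod>i<length obs. km_factor ?ys z i)"
      by (intro prod.cong) auto
    with elim assms show ?case by (simp add: km_cdf_eq_prod)
  qed
qed

lemma km_policy_le_iff:
  assumes "0 \<le> z" "z < 1" "q \<le> 1"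
  shows "km_policy q obs \<le> z \<longleftrightarrow> q \<le> km_cdf obs z"
proof
  let ?A = "{u \<in> {0..1}. q \<le> km_cdf obs u}"
  have bdd: "bdd_below ?A" by (auto intro: bdd_belowI[of _ 0])
  show "q \<le> km_cdf obs z" if "km_policy q obs \<le> z"
  proof (rule ccontr)
    assume below: "\<not> q \<le> km_cdf obs z"
    obtain b where "b > z" and const: "\<And>u. z < u \<Longrightarrow> u < b \<Longrightarrow> km_cdf obs u = km_cdf obs z"
      using eventually_km_cdf_at_right[OF \<open>z < 1\<close>, of obs] by (auto simp: eventually_at_right_field)
    have "b \<le> u" if "u \<in> ?A" for u
    proof (rule ccontr)
      assume "\<not> b \<le> u"
      then have "km_cdf obs u \<le> km_cdf obs z"
        using const[of u] monoD[OF km_cdf_mono, of u z] by (cases "u \<le> z") auto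
      then show False using that below by simp
    qed
    moreover have "1 \<in> ?A" using assms by (simp add: km_cdf_def)
    ultimately have "b \<le> km_policy q obs"
      unfolding km_policy_def by (intro cInf_greatest) auto
    then show False using that \<open>b > z\<close> by simp
  qed
  show "km_policy q obs \<le> z" if "q \<le> km_cdf obs z"
    unfolding km_policy_def using that assms by (intro cInf_lower[OF _ bdd]) auto
qed

lemma km_cdf_map:
  assumes "u < 1" "v < 1"
    and key_mono: "\<And>p p'. p \<in> set obs \<Longrightarrow> p' \<in> set obs \<Longrightarrow>
      km_key p \<le> km_key p' \<Longrightarrow> km_key (\<psi> p) \<le> km_key (\<psi> p')"
    and uncensored_below: "\<And>p. p \<in> set obs \<Longrightarrow>
      (fst (\<psi> p) \<le> v \<and> snd (\<psi> p)) \<longleftrightarrow> (fst p \<le> u \<and> snd p)"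
  shows "km_cdf (map \<psi> obs) v = km_cdf obs u"
proof -
  let ?ys = "km_sorted obs"
  have "sorted_wrt (\<lambda>p p'. km_key p \<le> km_key p') ?ys"
    by (metis km_sorted_eq_sort_key sorted_map sorted_sort_key)
  then have "sorted_wrt (\<lambda>p p'. km_key (\<psi> p) \<le> km_key (\<psi> p')) ?ys"
    by (rule sorted_wrt_mono_rel[rotated]) (auto simp: km_sorted_eq_sort_key key_mono)
  then have "km_sorted (map \<psi> obs) = map \<psi> ?ys"
    unfolding km_sorted_eq_sort_key[of "map \<psi> obs"]
    by (intro sort_key_inj_key_eq)
      (auto simp: km_sorted_eq_sort_key sorted_map sorted_wrt_map inj_on_subset[OF inj_km_key])
  moreover have "km_factor (map \<psi> ?ys) v i = km_factor ?ys u i" if "i < length obs" for i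
  proof -
    have "?ys ! i \<in> set obs" using that by (metis km_sorted_eq_sort_key length_km_sorted nth_mem set_sort)
    then show ?thesis using that uncensored_below by (simp add: km_factor_def)
  qed
  ultimately show ?thesis using assms(1,2) by (simp add: km_cdf_eq_prod)
qed

lemma measure_PiM_pattern:
  fixes c :: "'a \<Rightarrow> 'b"
  assumes "finite I" "prob_space M" "finite S" "S \<subseteq> extensional I"
    and cells: "\<And>s i. s \<in> S \<Longrightarrow> i \<in> I \<Longrightarrow> c -` {s i} \<inter> space M \<in> sets M"
  shows "measure (PiM I (\<lambda>_. M)) {\<omega> \<in> space (PiM I (\<lambda>_. M)). (\<lambda>i\<in>I. c (\<omega> i)) \<in> S}
       = (\<Sum>s\<in>S. \<Prod>i\<in>I. measure M (c -` {s i} \<inter> space M))"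
proof -
  interpret M: prob_space M by fact
  interpret finite_product_prob_space "\<lambda>_. M" I by unfold_locales fact
  let ?cyl = "\<lambda>s. \<Pi>\<^sub>E i\<in>I. c -` {s i} \<inter> space M"
  have "{\<omega> \<in> space (PiM I (\<lambda>_. M)). (\<lambda>i\<in>I. c (\<omega> i)) \<in> S} = (\<Union>s\<in>S. ?cyl s)"
  proof (intro set_eqI iffI)
    fix \<omega> assume "\<omega> \<in> (\<Union>s\<in>S. ?cyl s)"
    then obtain s where "s \<in> S" "\<omega> \<in> ?cyl s" by blast
    moreover have "(\<lambda>i\<in>I. c (\<omega> i)) = s"
      using calculation assms(4) by (auto intro!: extensionalityI[of _ I] simp: PiE_iff)
    ultimately show "\<omega> \<in> {\<omega> \<in> space (PiM I (\<lambda>_. M)). (\<lambda>i\<in>I. c (\<omega> i)) \<in> S}"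
      by (auto simp: space_PiM PiE_iff)
  next
    fix \<omega> assume "\<omega> \<in> {\<omega> \<in> space (PiM I (\<lambda>_. M)). (\<lambda>i\<in>I. c (\<omega> i)) \<in> S}"
    then show "\<omega> \<in> (\<Union>s\<in>S. ?cyl s)"
      by (intro UN_I[of "\<lambda>i\<in>I. c (\<omega> i)"]) (auto simp: space_PiM PiE_iff)
  qed
  moreover have "disjoint_family_on ?cyl S"
    unfolding disjoint_family_on_def
  proof (intro ballI impI)
    fix s t assume "s \<in> S" "t \<in> S" "s \<noteq> t"
    then obtain i where "i \<in> I" "s i \<noteq> t i"
      using assms(4) extensionalityI[of s I t] by blast
    then show "?cyl s \<inter> ?cyl t = {}" by (fastforce simp: PiE_def Pi_def)
  qed
  ultimately show ?thesis
    using assms(3) cells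
    by (simp add: measure_finite_Union finite_measure_PiM_emb sets_PiM_I_finite \<open>finite I\<close> subset_eq)
qed

lemma xb_mono:
  assumes "K \<ge> 1" "0 \<le> x 1" "\<forall>k\<in>{1..<K}. x k \<le> x (Suc k)" "x K \<le> 1"
    and "i \<le> j" "j \<le> Suc K"
  shows "xb K x i \<le> xb K x j"
proof (rule lift_Suc_mono_le_ivl[where N="{..K}"])
  show "xb K x n \<le> xb K x (Suc n)" if "n \<in> {..K}" for n
    using assms(1-4) that by (auto simp: xb_def)
qed (use assms in auto)

lemma xb_eq [simp]: "j \<in> {1..K} \<Longrightarrow> xb K x j = x j"
  by (simp add: xb_def)

lemma finite_dem_idx: "finite (dem_idx K nn)"
proof -
  have "dem_idx K nn = Sigma {1..K} (\<lambda>k. {1..nn k})" by (auto simp: dem_idx_def)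
  then show ?thesis by simp
qed

(* Representatives of the cells (x_k, z] and (z, inf): any two points strictly between x_k and
   x_(k+1) would do; choosing them independently of z makes the polynomial uniform in z. *)
definition rep_z :: "nat \<Rightarrow> (nat \<Rightarrow> real) \<Rightarrow> nat \<Rightarrow> real" where
  "rep_z K x k = (2 * xb K x k + xb K x (Suc k)) / 3"

definition rep_top :: "nat \<Rightarrow> (nat \<Rightarrow> real) \<Rightarrow> nat \<Rightarrow> real" where
  "rep_top K x k = (xb K x k + 2 * xb K x (Suc k)) / 3"

definition cell_rep :: "nat \<Rightarrow> (nat \<Rightarrow> real) \<Rightarrow> nat \<Rightarrow> nat \<Rightarrow> real" where
  "cell_rep K x k c = (if c \<le> k then xb K x c else if c = Suc k then rep_z K x k else rep_top K x k)"

definition coarse_obs :: "nat \<Rightarrow> (nat \<Rightarrow> real) \<Rightarrow> nat \<Rightarrow> nat \<Rightarrow> nat \<Rightarrow> real \<times> bool" where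
  "coarse_obs K x k j c =
     (if j \<le> k then (min (cell_rep K x k c) (x j), c \<le> j) else (cell_rep K x k c, c \<le> Suc k))"

definition coarse_observations ::
  "nat \<Rightarrow> (nat \<Rightarrow> real) \<Rightarrow> (nat \<Rightarrow> nat) \<Rightarrow> nat \<Rightarrow> (nat \<times> nat \<Rightarrow> nat) \<Rightarrow> (real \<times> bool) list" where
  "coarse_observations K x nn k s =
     concat (map (\<lambda>j. map (\<lambda>i. coarse_obs K x k j (s (j, i))) [1..<Suc (nn j)]) [1..<Suc K])"

definition km_event_patterns ::
  "nat \<Rightarrow> (nat \<Rightarrow> real) \<Rightarrow> (nat \<Rightarrow> nat) \<Rightarrow> nat \<Rightarrow> real \<Rightarrow> (nat \<times> nat \<Rightarrow> nat) set" where
  "km_event_patterns K x nn k q =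
     {s \<in> dem_idx K nn \<rightarrow>\<^sub>E {1..Suc (Suc k)}. q \<le> km_cdf (coarse_observations K x nn k s) (rep_z K x k)}"

lemma coarse_observations_restrict:
  "coarse_observations K x nn k (restrict s (dem_idx K nn)) = coarse_observations K x nn k s"
  unfolding coarse_observations_def dem_idx_def by (intro arg_cong[where f=concat] map_cong refl) auto

definition cell_cdf :: "nat \<Rightarrow> (nat \<Rightarrow> real) \<Rightarrow> real \<Rightarrow> nat \<Rightarrow> real" where
  "cell_cdf k v t m = (if m = 0 then 0 else if m \<le> k then v m else if m = Suc k then t else 1)"

definition cell_poly :: "nat \<Rightarrow> 'i set \<Rightarrow> ('i \<Rightarrow> nat) set \<Rightarrow> (nat \<Rightarrow> real) \<times> real \<Rightarrow> real" where
  "cell_poly k I S p =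
     (\<Sum>s\<in>S. \<Prod>i\<in>I. cell_cdf k (fst p) (snd p) (s i) - cell_cdf k (fst p) (snd p) (s i - 1))"

lemma continuous_on_cell_cdf: "continuous_on A (\<lambda>p. cell_cdf k (fst p) (snd p) m)"
proof -
  have "continuous_on A (\<lambda>p :: (nat \<Rightarrow> real) \<times> real. fst p m)"
    by (rule continuous_on_compose2[OF continuous_on_product_coordinates continuous_on_fst]) auto
  then show ?thesis
    unfolding cell_cdf_def
    by (cases "m = 0"; cases "m \<le> k"; cases "m = Suc k") (simp_all add: continuous_on_snd)
qed

lemma continuous_on_cell_poly: "continuous_on A (cell_poly k I S)"
  unfolding cell_poly_def by (intro continuous_intros continuous_on_cell_cdf)

locale cell_partition =
  fixes K :: nat and x :: "nat \<Rightarrow> real" and k :: nat and z :: real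
  assumes xb_mono: "\<And>i j. i \<le> j \<Longrightarrow> j \<le> Suc K \<Longrightarrow> xb K x i \<le> xb K x j"
    and k_le_K: "k \<le> K"
    and z_lower: "xb K x k \<le> z"
    and z_upper: "z < xb K x (Suc k)"
begin

definition cell_bound :: "nat \<Rightarrow> real" where
  "cell_bound j = (if j \<le> k then xb K x j else z)"

definition cell :: "real \<Rightarrow> nat" where
  "cell y = Suc (card {j \<in> {1..Suc k}. cell_bound j < y})"

definition coarsen :: "real \<Rightarrow> real" where
  "coarsen y = cell_rep K x k (cell y)"

definition coarsen_obs :: "real \<times> bool \<Rightarrow> real \<times> bool" where
  "coarsen_obs p = (coarsen (fst p), coarsen (fst p) \<le> rep_z K x k \<and> snd p)"

lemma cell_bound_mono: "i \<le> j \<Longrightarrow> j \<le> Suc k \<Longrightarrow> cell_bound i \<le> cell_bound j"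
  using xb_mono[of i j] xb_mono[of i k] k_le_K z_lower by (auto simp: cell_bound_def)

lemma cell_le_iff:
  assumes "1 \<le> j" "j \<le> Suc k"
  shows "cell y \<le> j \<longleftrightarrow> y \<le> cell_bound j"
proof
  assume "cell y \<le> j"
  show "y \<le> cell_bound j"
  proof (rule ccontr)
    assume "\<not> y \<le> cell_bound j"
    then have "{1..j} \<subseteq> {i \<in> {1..Suc k}. cell_bound i < y}"
      using cell_bound_mono assms by fastforce
    then have "j \<le> card {i \<in> {1..Suc k}. cell_bound i < y}"
      using card_mono[of "{i \<in> {1..Suc k}. cell_bound i < y}" "{1..j}"] by simp
    with \<open>cell y \<le> j\<close> show False by (simp add: cell_def)
  qed
next
  assume "y \<le> cell_bound j"
  have "{i \<in> {1..Suc k}. cell_bound i < y} \<subseteq> {1..<j}"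
  proof
    fix i assume i: "i \<in> {i \<in> {1..Suc k}. cell_bound i < y}"
    have "\<not> j \<le> i" using cell_bound_mono[of j i] i \<open>y \<le> cell_bound j\<close> by auto
    then show "i \<in> {1..<j}" using i by auto
  qed
  then have "card {i \<in> {1..Suc k}. cell_bound i < y} \<le> j - 1"
    using card_mono[of "{1..<j}"] by fastforce
  then show "cell y \<le> j" using assms by (simp add: cell_def)
qed

lemma cell_range: "cell y \<in> {1..Suc (Suc k)}"
proof -
  have "card {j \<in> {1..Suc k}. cell_bound j < y} \<le> card {1..Suc k}" by (intro card_mono) auto
  then show ?thesis by (simp add: cell_def)
qed

lemma cell_mono: "mono cell"
  unfolding cell_def by (intro monoI) (auto intro!: card_mono)

lemma cell_le_Suc_k_iff: "cell y \<le> Suc k \<longleftrightarrow> y \<le> z"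
  using cell_le_iff[of "Suc k" y] by (simp add: cell_bound_def)

lemma z_nonneg: "0 \<le> z"
  using xb_mono[of 0 k] k_le_K z_lower by (simp add: xb_def)

lemma z_less_1: "z < 1"
  using xb_mono[of "Suc k" "Suc K"] k_le_K z_upper by (simp add: xb_def)

lemma z_less_x: "k < j \<Longrightarrow> j \<le> K \<Longrightarrow> z < x j"
  using xb_mono[of "Suc k" j] z_upper by simp

lemma xb_le_xb_k: "j \<le> k \<Longrightarrow> xb K x j \<le> xb K x k"
  using xb_mono k_le_K by simp

lemma rep_bounds:
  "xb K x k < rep_z K x k" "rep_z K x k < rep_top K x k" "rep_top K x k < xb K x (Suc k)"
  using z_lower z_upper by (simp_all add: rep_z_def rep_top_def field_simps)

lemma rep_z_less_1: "rep_z K x k < 1"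
  using rep_bounds xb_mono[of "Suc k" "Suc K"] k_le_K by (simp add: xb_def)

lemma cell_rep_mono: "mono (cell_rep K x k)"
proof
  fix c c' :: nat assume "c \<le> c'"
  then show "cell_rep K x k c \<le> cell_rep K x k c'"
    using xb_mono[of c c'] xb_le_xb_k[of c] k_le_K rep_bounds by (auto simp: cell_rep_def)
qed

lemma cell_rep_le_rep_z_iff: "cell_rep K x k c \<le> rep_z K x k \<longleftrightarrow> c \<le> Suc k"
  using rep_bounds xb_le_xb_k[of c] by (auto simp: cell_rep_def)

lemma cell_rep_le_rep_top: "cell_rep K x k c \<le> rep_top K x k"
  using rep_bounds xb_le_xb_k[of c] by (auto simp: cell_rep_def)

lemma coarsen_mono: "mono coarsen"
  unfolding coarsen_def using cell_mono cell_rep_mono by (auto simp: mono_def)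

lemma coarsen_le_rep_z_iff: "coarsen y \<le> rep_z K x k \<longleftrightarrow> y \<le> z"
  by (simp add: coarsen_def cell_rep_le_rep_z_iff cell_le_Suc_k_iff)

lemma coarsen_threshold_eq:
  assumes "1 \<le> j" "j \<le> k"
  shows "coarsen (x j) = x j"
proof -
  have j: "j \<in> {1..K}" using assms k_le_K by simp
  define m where "m = cell (x j)"
  have "m \<le> j" using cell_le_iff[of j "x j"] assms j by (simp add: m_def cell_bound_def)
  moreover have "1 \<le> m" using cell_range by (simp add: m_def)
  ultimately have "x j \<le> xb K x m" using cell_le_iff[of m "x j"] assms by (simp add: m_def cell_bound_def)
  moreover have "xb K x m \<le> x j" using xb_mono[of m j] \<open>m \<le> j\<close> j k_le_K by simp
  ultimately have "xb K x m = x j" by linarith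
  then show ?thesis
    using \<open>m \<le> j\<close> assms unfolding coarsen_def m_def[symmetric] by (simp add: cell_rep_def)
qed

lemma threshold_less_coarsen:
  assumes "1 \<le> j" "j \<le> k" "x j < y" "y \<le> z"
  shows "x j < coarsen y"
proof -
  define m where "m = cell y"
  have m: "1 \<le> m" "m \<le> Suc k" using cell_range cell_le_Suc_k_iff assms(4) by (auto simp: m_def)
  show ?thesis
  proof (cases "m \<le> k")
    case True
    then have "y \<le> xb K x m" using cell_le_iff[of m y] m by (simp add: m_def cell_bound_def)
    then show ?thesis using assms(3) True by (simp add: coarsen_def m_def[symmetric] cell_rep_def)
  next
    case False
    then have "m = Suc k" using m by simp
    then show ?thesis
      using xb_le_xb_k[of j] assms k_le_K rep_bounds by (simp add: coarsen_def m_def[symmetric] cell_rep_def)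
  qed
qed

lemma coarsen_threshold_above:
  assumes "k < j" "j \<le> K"
  shows "coarsen (x j) = rep_top K x k"
proof -
  have "\<not> cell (x j) \<le> Suc k" using z_less_x[OF assms] cell_le_Suc_k_iff by simp
  then show ?thesis by (simp add: coarsen_def cell_rep_def)
qed

lemma coarsen_obs_demand:
  assumes "j \<in> {1..K}"
  shows "coarsen_obs (min y (x j), y \<le> x j) = coarse_obs K x k j (cell y)"
proof (cases "j \<le> k")
  case True
  have "coarsen (min y (x j)) = min (coarsen y) (x j)"
    using min_of_mono[OF coarsen_mono, of y "x j"] coarsen_threshold_eq[of j] assms True by simp
  moreover have "x j \<le> rep_z K x k" using xb_le_xb_k[OF True] assms rep_bounds by simp
  moreover have "y \<le> x j \<longleftrightarrow> cell y \<le> j" using cell_le_iff[of j y] assms True by (simp add: cell_bound_def)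
  ultimately show ?thesis using True by (simp add: coarsen_obs_def coarse_obs_def coarsen_def min_le_iff_disj)
next
  case False
  have "coarsen (min y (x j)) = min (coarsen y) (coarsen (x j))"
    using min_of_mono[OF coarsen_mono, of y "x j"] by simp
  also have "\<dots> = coarsen y"
    using coarsen_threshold_above[of j] assms False cell_rep_le_rep_top
    by (simp add: coarsen_def min_absorb1)
  finally have "coarsen (min y (x j)) = coarsen y" .
  moreover have "y \<le> z \<Longrightarrow> y \<le> x j" using z_less_x[of j] assms False by simp
  ultimately show ?thesis using False
    by (auto simp: coarsen_obs_def coarse_obs_def coarsen_le_rep_z_iff cell_le_Suc_k_iff
        coarsen_def[symmetric])
qed

lemma map_coarsen_observations:
  "map coarsen_obs (observations K x nn D) = coarse_observations K x nn k (\<lambda>i. cell (D i))"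
  unfolding observations_def coarse_observations_def map_concat
  by (auto intro!: arg_cong[where f=concat] simp: coarsen_obs_demand)

lemma coarsen_obs_key_mono:
  assumes key: "km_key p \<le> km_key p'"
    and censored: "\<not> snd p \<Longrightarrow> \<exists>j\<in>{1..K}. fst p = x j"
  shows "km_key (coarsen_obs p) \<le> km_key (coarsen_obs p')"
proof -
  have le: "coarsen (fst p) \<le> coarsen (fst p')"
    using key monoD[OF coarsen_mono] by (auto simp: km_key_le_iff)
  have "snd p" if eq: "coarsen (fst p) = coarsen (fst p')" and below: "coarsen (fst p') \<le> rep_z K x k"
    and "snd p'" and lt: "fst p < fst p'"
  proof (rule ccontr)
    assume "\<not> snd p"
    then obtain j where j: "j \<in> {1..K}" "fst p = x j" using censored by blast
    have "fst p' \<le> z" using below coarsen_le_rep_z_iff by simp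
    then have "j \<le> k" using z_less_x[of j] j lt by force
    then have "coarsen (fst p) < coarsen (fst p')"
      using coarsen_threshold_eq threshold_less_coarsen j lt \<open>fst p' \<le> z\<close> by simp
    then show False using eq by simp
  qed
  then show ?thesis using key le by (auto simp: km_key_le_iff coarsen_obs_def)
qed

lemma km_cdf_observations_eq_coarse:
  "km_cdf (observations K x nn D) z
   = km_cdf (coarse_observations K x nn k (\<lambda>i. cell (D i))) (rep_z K x k)"
proof -
  have "km_cdf (map coarsen_obs (observations K x nn D)) (rep_z K x k)
      = km_cdf (observations K x nn D) z"
  proof (rule km_cdf_map[OF z_less_1 rep_z_less_1])
    fix p p' assume "p \<in> set (observations K x nn D)" "km_key p \<le> km_key p'"
    then show "km_key (coarsen_obs p) \<le> km_key (coarsen_obs p')"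
      by (intro coarsen_obs_key_mono) (auto simp: observations_def)
  qed (auto simp: coarsen_obs_def coarsen_le_rep_z_iff)
  then show ?thesis by (simp add: map_coarsen_observations)
qed

lemma cell_le_eq:
  "{y. cell y \<le> m} = (if m = 0 then {} else if m \<le> Suc k then {..cell_bound m} else UNIV)"
proof (cases "m = 0 \<or> Suc k < m")
  case True
  then have "cell y \<le> m \<longleftrightarrow> m \<noteq> 0" for y using cell_range[of y] by auto
  then show ?thesis using True by auto
next
  case False
  then show ?thesis using cell_le_iff[of m] by auto
qed

lemma measure_cell_le:
  assumes "is_demand_dist M"
  shows "measure M {y. cell y \<le> m}
       = cell_cdf k (\<lambda>j. if j \<in> {1..k} then cdf_of M (x j) else 0) (cdf_of M z) m"
proof -
  interpret prob_space M using assms by (simp add: is_demand_dist_def)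
  have "space M = UNIV" using assms sets_eq_imp_space_eq[of M borel] by (simp add: is_demand_dist_def)
  then show ?thesis
    using k_le_K prob_space by (simp add: cell_le_eq cell_cdf_def cdf_of_def cell_bound_def)
qed

lemma cell_vimage_eq: "cell -` {m} = {y. cell y \<le> m} - {y. cell y \<le> m - 1}"
proof -
  have "cell y = m \<longleftrightarrow> cell y \<le> m \<and> \<not> cell y \<le> m - 1" for y using cell_range[of y] by auto
  then show ?thesis by auto
qed

lemma cell_vimage_sets:
  assumes "is_demand_dist M"
  shows "cell -` {m} \<inter> space M \<in> sets M"
proof -
  have sets: "sets M = sets borel" using assms by (simp add: is_demand_dist_def)
  then have "space M = UNIV" using sets_eq_imp_space_eq[of M borel] by simp
  then show ?thesis by (simp add: sets cell_vimage_eq cell_le_eq)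
qed

lemma measure_cell_eq:
  assumes "is_demand_dist M"
  shows "measure M (cell -` {m} \<inter> space M)
       = cell_cdf k (\<lambda>j. if j \<in> {1..k} then cdf_of M (x j) else 0) (cdf_of M z) m
       - cell_cdf k (\<lambda>j. if j \<in> {1..k} then cdf_of M (x j) else 0) (cdf_of M z) (m - 1)"
proof -
  interpret prob_space M using assms by (simp add: is_demand_dist_def)
  have sets: "sets M = sets borel" using assms by (simp add: is_demand_dist_def)
  then have "space M = UNIV" using sets_eq_imp_space_eq[of M borel] by simp
  moreover have "{y. cell y \<le> j} \<in> sets M" for j by (simp add: sets cell_le_eq)
  moreover have "{y. cell y \<le> m - 1} \<subseteq> {y. cell y \<le> m}" by auto
  ultimately show ?thesis
    by (simp add: cell_vimage_eq finite_measure_Diff measure_cell_le[OF assms])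
qed

lemma measure_km_policy_le:
  assumes M: "is_demand_dist M" and "q \<le> 1"
  shows "measure (PiM (dem_idx K nn) (\<lambda>_. M))
           {D \<in> space (PiM (dem_idx K nn) (\<lambda>_. M)). km_policy q (observations K x nn D) \<le> z}
       = cell_poly k (dem_idx K nn) (km_event_patterns K x nn k q)
           (\<lambda>j. if j \<in> {1..k} then cdf_of M (x j) else 0, cdf_of M z)"
proof -
  let ?I = "dem_idx K nn" and ?S = "km_event_patterns K x nn k q"
  have "km_policy q (observations K x nn D) \<le> z \<longleftrightarrow> (\<lambda>i\<in>?I. cell (D i)) \<in> ?S" for D
  proof -
    have "km_cdf (observations K x nn D) z
        = km_cdf (coarse_observations K x nn k (\<lambda>i\<in>?I. cell (D i))) (rep_z K x k)"
      unfolding coarse_observations_restrict by (rule km_cdf_observations_eq_coarse)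
    then have "km_policy q (observations K x nn D) \<le> z
        \<longleftrightarrow> q \<le> km_cdf (coarse_observations K x nn k (\<lambda>i\<in>?I. cell (D i))) (rep_z K x k)"
      by (simp only: km_policy_le_iff[OF z_nonneg z_less_1 \<open>q \<le> 1\<close>])
    moreover have "(\<lambda>i\<in>?I. cell (D i)) \<in> ?I \<rightarrow>\<^sub>E {1..Suc (Suc k)}" using cell_range by auto
    ultimately show ?thesis unfolding km_event_patterns_def by blast
  qed
  then have event: "{D \<in> space (PiM ?I (\<lambda>_. M)). km_policy q (observations K x nn D) \<le> z}
           = {D \<in> space (PiM ?I (\<lambda>_. M)). (\<lambda>i\<in>?I. cell (D i)) \<in> ?S}" by simp
  have "measure (PiM ?I (\<lambda>_. M)) {D \<in> space (PiM ?I (\<lambda>_. M)). (\<lambda>i\<in>?I. cell (D i)) \<in> ?S}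
      = (\<Sum>s\<in>?S. \<Prod>i\<in>?I. measure M (cell -` {s i} \<inter> space M))"
  proof (rule measure_PiM_pattern[OF finite_dem_idx, where c = cell and S = ?S])
    have patterns: "?S \<subseteq> ?I \<rightarrow>\<^sub>E {1..Suc (Suc k)}" by (auto simp: km_event_patterns_def)
    show "finite ?S" by (rule finite_subset[OF patterns finite_PiE[OF finite_dem_idx]]) simp
    show "?S \<subseteq> extensional ?I" using patterns by (auto simp: PiE_def)
    show "prob_space M" using M by (simp add: is_demand_dist_def)
    show "cell -` {s i} \<inter> space M \<in> sets M" for s i
      using M by (rule cell_vimage_sets)
  qed
  also have "\<dots> = cell_poly k ?I ?S (\<lambda>j. if j \<in> {1..k} then cdf_of M (x j) else 0, cdf_of M z)"
    unfolding cell_poly_def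
    by (intro sum.cong prod.cong refl) (simp add: measure_cell_eq[OF M])
  finally show ?thesis unfolding event .
qed

end

lemma km_policy_separable_on_cell:
  fixes x :: "nat \<Rightarrow> real"
  assumes "K \<ge> 1" "0 \<le> x 1" "\<forall>k\<in>{1..<K}. x k \<le> x (Suc k)" "x K \<le> 1"
    and "k \<le> K" "q \<le> 1"
  shows "\<exists>P :: (nat \<Rightarrow> real) \<times> real \<Rightarrow> real.
           continuous_on (pw_dom k) P \<and> P ` pw_dom k \<subseteq> {0..1} \<and>
           (\<forall>M. is_demand_dist M \<longrightarrow>
              (\<forall>z. xb K x k \<le> z \<and> z < xb K x (Suc k) \<longrightarrow>
                 measure (PiM (dem_idx K nn) (\<lambda>_. M))
                   {D \<in> space (PiM (dem_idx K nn) (\<lambda>_. M)). km_policy q (observations K x nn D) \<le> z}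
                 = P (\<lambda>j. if j \<in> {1..k} then cdf_of M (x j) else 0, cdf_of M z)))"
proof -
  \<comment> \<open>The clamp does not affect the identity, whose left side is a probability, but is needed on
     pw_dom, whose points need not be ordered like values of a CDF.\<close>
  define P where "P p = max 0 (min 1 (cell_poly k (dem_idx K nn) (km_event_patterns K x nn k q) p))" for p
  have "continuous_on (pw_dom k) P"
    unfolding P_def by (intro continuous_intros continuous_on_cell_poly)
  moreover have "P ` pw_dom k \<subseteq> {0..1}" by (auto simp: P_def)
  moreover have "measure (PiM (dem_idx K nn) (\<lambda>_. M))
      {D \<in> space (PiM (dem_idx K nn) (\<lambda>_. M)). km_policy q (observations K x nn D) \<le> z}
      = P (\<lambda>j. if j \<in> {1..k} then cdf_of M (x j) else 0, cdf_of M z)"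
    if M: "is_demand_dist M" and z: "xb K x k \<le> z" "z < xb K x (Suc k)" for M z
  proof -
    interpret cell_partition K x k z
      using xb_mono[OF assms(1-4)] assms(5) z by unfold_locales auto
    have "prob_space (PiM (dem_idx K nn) (\<lambda>_. M))"
      using M by (intro prob_space_PiM) (simp add: is_demand_dist_def)
    then have "measure (PiM (dem_idx K nn) (\<lambda>_. M))
        {D \<in> space (PiM (dem_idx K nn) (\<lambda>_. M)). km_policy q (observations K x nn D) \<le> z} \<le> 1"
      by (rule prob_space.prob_le_1)
    moreover have "0 \<le> measure (PiM (dem_idx K nn) (\<lambda>_. M))
        {D \<in> space (PiM (dem_idx K nn) (\<lambda>_. M)). km_policy q (observations K x nn D) \<le> z}"
      by (rule measure_nonneg)
    ultimately show ?thesis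
      unfolding measure_km_policy_le[OF M \<open>q \<le> 1\<close>] by (simp add: P_def)
  qed
  ultimately show ?thesis by blast
qed

theorem lemma6:
  fixes cu co :: real and K :: nat and x :: "nat \<Rightarrow> real" and nn :: "nat \<Rightarrow> nat"
  assumes "cu > 0" and "co > 0" and "K \<ge> 1"
    and "0 \<le> x 1" and "\<forall>k\<in>{1..<K}. x k \<le> x (Suc k)" and "x K \<le> 1"
  shows "\<forall>k\<in>{0..K}. \<exists>P :: (nat \<Rightarrow> real) \<times> real \<Rightarrow> real.
           continuous_on (pw_dom k) P \<and> P ` pw_dom k \<subseteq> {0..1} \<and>
           (\<forall>M. is_demand_dist M \<longrightarrow>
              (\<forall>z. xb K x k \<le> z \<and> z < xb K x (Suc k) \<longrightarrow>
                 measure (PiM (dem_idx K nn) (\<lambda>_. M))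
                   {D \<in> space (PiM (dem_idx K nn) (\<lambda>_. M)).
                      km_policy (cu / (cu + co)) (observations K x nn D) \<le> z}
                 = P (\<lambda>j. if j \<in> {1..k} then cdf_of M (x j) else 0, cdf_of M z)))"
proof -
  have "cu / (cu + co) \<le> 1" using assms(1,2) by simp
  then show ?thesis using km_policy_separable_on_cell[OF assms(3-6)] by simp
qed

end
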